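(* Let $\lambda\in(\frac16,\frac56)$ and $n\ge0$. For all $x\in[0,1]\setminus\mathcal E$, $$|F^\lambda(x)-F^\lambda(a_n(x))|\ge|m_n(x)|\,|x-a_n(x)|.$$
   Context: Construction: $F^\lambda_0\equiv0$ on $[0,1]$. Given $F^\lambda_n$ with its $4^n$ closed intervals of generation $n$ (covering $[0,1]$, disjoint interiors, $F^\lambda_n$ affine on each), on each interval $[a,b]$ of generation $n$, with $\ell=b-a$ and slope $m$, $F^\lambda_{n+1}$ coincides with $F^\lambda_n$ at $a,a+\ell/3,a+2\ell/3,b$, equals $F^\lambda_n(a+\ell/2)+\lambda\ell\sqrt{1+m^2}$ at $a+\ell/2$, and is affine on $[a,a+\ell/3],[a+\ell/3,a+\ell/2],[a+\ell/2,a+2\ell/3],[a+2\ell/3,b]$. $F^\lambda=\lim_nF^\lambda_n$. Dynamics: $T(x)=3x$ on $[0,\frac13)$, $6x-2$ on $[\frac13,\frac12)$, $4-6x$ on $[\frac12,\frac23)$, $3x-2$ on $[\frac23,1]$; $U(x)=0,1,2,3$ and $\widetilde U(x)=0,\frac13,\frac23,\frac23$ on these intervals respectively; $u_n(x)=U(T^nx)$, $\widetilde u_n(x)=\widetilde U(T^nx)$; $\beta_i(x,n)=\#\{k<n:u_k(x)=i\}$, $\beta_{i,j}=\beta_i+\beta_j$; $\varepsilon_n(x)=(-1)^{\beta_2(x,n)}$, $\ell_n(x)=3^{-\beta_{0,3}(x,n)}6^{-\beta_{1,2}(x,n)}$, $a_0(x)=0$, $a_n(x)=\sum_{k=0}^{n-1}\widetilde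 u_k(x)\varepsilon_k(x)\ell_k(x)$. $\mathcal E$ is the set of $x$ whose digit sequence is eventually constantly $0$ or eventually constantly $3$; for $x\notin\mathcal E$, $m_n(x)$ is the slope of $F^\lambda_n$ at $x$. *)

theory Defs
  imports "HOL-Analysis.Analysis"
begin

text \<open>F_n is represented by its list of nodes (breakpoints) (x, F_n x), sorted by x,
  covering [0,1]; F_n is the affine interpolation of consecutive nodes.
  Each consecutive pair of nodes delimits one interval of generation n.\<close>

definition refine_seg :: "real \<Rightarrow> real \<times> real \<Rightarrow> real \<times> real \<Rightarrow> (real \<times> real) list" where
  "refine_seg lam p q =
     (let a = fst p; ya = snd p; b = fst q; yb = snd q; l = b - a; m = (yb - ya) / l in
      [(a, ya),
       (a + l/3, ya + m * (l/3)),
       (a + l/2, ya + m * (l/2) + lam * l * sqrt (1 + m\<^sup>2)),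
       (a + 2*l/3, ya + m * (2*l/3))])"

fun refine :: "real \<Rightarrow> (real \<times> real) list \<Rightarrow> (real \<times> real) list" where
  "refine lam [] = []"
| "refine lam [p] = [p]"
| "refine lam (p # q # rest) = refine_seg lam p q @ refine lam (q # rest)"

fun nodes :: "real \<Rightarrow> nat \<Rightarrow> (real \<times> real) list" where
  "nodes lam 0 = [(0, 0), (1, 0)]"
| "nodes lam (Suc n) = refine lam (nodes lam n)"

fun interp :: "(real \<times> real) list \<Rightarrow> real \<Rightarrow> real" where
  "interp [] x = 0"
| "interp [p] x = snd p"
| "interp (p # q # rest) x =
     (if x \<le> fst q then snd p + (snd q - snd p) / (fst q - fst p) * (x - fst p)
      else interp (q # rest) x)"

definition Fn :: "real \<Rightarrow> nat \<Rightarrow> real \<Rightarrow> real" where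
  "Fn lam n x = interp (nodes lam n) x"

definition F :: "real \<Rightarrow> real \<Rightarrow> real" where
  "F lam x = lim (\<lambda>n. Fn lam n x)"

text \<open>m_n(x): slope of F_n at x (meaningful for x not in E, where x is interior
  to an interval of generation n).\<close>
definition slope_n :: "real \<Rightarrow> nat \<Rightarrow> real \<Rightarrow> real" where
  "slope_n lam n x = deriv (Fn lam n) x"

definition T :: "real \<Rightarrow> real" where
  "T x = (if x < 1/3 then 3*x else if x < 1/2 then 6*x - 2
          else if x < 2/3 then 4 - 6*x else 3*x - 2)"

definition U :: "real \<Rightarrow> nat" where
  "U x = (if x < 1/3 then 0 else if x < 1/2 then 1 else if x < 2/3 then 2 else 3)"

definition Ut :: "real \<Rightarrow> real" where
  "Ut x = (if x < 1/3 then 0 else if x < 1/2 then 1/3 else if x < 2/3 then 2/3 else 2/3)"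

definition u :: "nat \<Rightarrow> real \<Rightarrow> nat" where
  "u n x = U ((T ^^ n) x)"

definition ut :: "nat \<Rightarrow> real \<Rightarrow> real" where
  "ut n x = Ut ((T ^^ n) x)"

definition beta :: "nat \<Rightarrow> real \<Rightarrow> nat \<Rightarrow> nat" where
  "beta i x n = card {k. k < n \<and> u k x = i}"

definition eps :: "real \<Rightarrow> nat \<Rightarrow> real" where
  "eps x n = (-1) ^ beta 2 x n"

definition ell :: "real \<Rightarrow> nat \<Rightarrow> real" where
  "ell x n = 1 / (3 ^ (beta 0 x n + beta 3 x n) * 6 ^ (beta 1 x n + beta 2 x n))"

definition a :: "nat \<Rightarrow> real \<Rightarrow> real" where
  "a n x = (\<Sum>k<n. ut k x * eps x k * ell x k)"

definition E :: "real set" where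
  "E = {x. (\<exists>N. \<forall>k\<ge>N. u k x = 0) \<or> (\<exists>N. \<forall>k\<ge>N. u k x = 3)}"

end

theory Submission
  imports Defs
begin

text \<open>
  Over every interval of generation n, the later approximations F_(n+k) are affine copies of the
  function built by the same construction over [0,1] from a segment of some slope m.  The inverse
  branches of T are exactly these changes of coordinates, and a_n(x) is the endpoint of the
  generation-n interval of x from which F_n rises towards x: the slopes stay nonnegative through
  the recursion because lambda >= 1/6 makes the descending middle piece reflect to a rising one.
  Nodes are never moved, so F(a_n(x)) = F_n(a_n(x)), while F_k(x) increases with k and converges
  because lambda < 5/6.  Hence F(x) - F(a_n(x)) >= F_n(x) - F_n(a_n(x)) = m_n(x) (x - a_n(x)) >= 0.
\<close>

lemma refine_hd_last:
  assumes "L \<noteq> []"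
  shows "refine lam L \<noteq> [] \<and> hd (refine lam L) = hd L \<and> last (refine lam L) = last L"
  using assms
proof (induction lam L rule: refine.induct)
  case (3 lam p q rest)
  then show ?case by (auto simp: refine_seg_def Let_def)
qed auto

lemma refine_iter_hd_last:
  assumes "L \<noteq> []"
  shows "(refine lam ^^ n) L \<noteq> [] \<and> hd ((refine lam ^^ n) L) = hd L \<and>
    last ((refine lam ^^ n) L) = last L"
  by (induction n) (use assms refine_hd_last in auto)

lemma sorted_refine:
  assumes "sorted (map fst L)"
  shows "sorted (map fst (refine lam L))"
  using assms
proof (induction lam L rule: refine.induct)
  case (3 lam p q rest)
  then have pq: "fst p \<le> fst q" and IH: "sorted (map fst (refine lam (q # rest)))" by auto
  obtain X where X: "refine lam (q # rest) = q # X"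
    using refine_hd_last[of "q # rest" lam] by (cases "refine lam (q # rest)") auto
  have "sorted (map fst (refine_seg lam p q))" "\<forall>z\<in>set (refine_seg lam p q). fst z \<le> fst q"
    using pq by (auto simp: refine_seg_def Let_def field_simps)
  moreover have "\<forall>z\<in>set X. fst q \<le> fst z" using IH unfolding X by simp
  ultimately show ?case using IH X by (auto simp: sorted_append intro: order_trans)
qed auto

lemma refine_butlast_append:
  assumes "L1 \<noteq> []" "L2 \<noteq> []" "last L1 = hd L2"
  shows "refine lam (butlast L1 @ L2) = butlast (refine lam L1) @ refine lam L2"
  using assms
proof (induction lam L1 rule: refine.induct)
  case (3 lam p q rest)
  have "butlast (q # rest) @ L2 \<noteq> [] \<and> hd (butlast (q # rest) @ L2) = q"
    using 3 by (cases rest) auto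
  then obtain X where X: "butlast (q # rest) @ L2 = q # X" by (cases "butlast (q # rest) @ L2") auto
  have "refine lam (q # rest) \<noteq> []" using refine_hd_last by blast
  moreover have "refine lam (q # X) = butlast (refine lam (q # rest)) @ refine lam L2"
    using 3 X by simp
  ultimately show ?case using X by (simp add: butlast_append)
qed auto

lemma refine_iter_butlast_append:
  assumes "L1 \<noteq> []" "L2 \<noteq> []" "last L1 = hd L2"
  shows "(refine lam ^^ n) (butlast L1 @ L2) = butlast ((refine lam ^^ n) L1) @ (refine lam ^^ n) L2"
  by (induction n) (use assms refine_butlast_append refine_iter_hd_last in auto)

lemma refine_iter_segment:
  fixes lam :: real and n :: nat
  assumes "fst p < fst q"
  defines "R \<equiv> (refine lam ^^ n) [p, q]"
  shows "2 \<le> length R" "hd R = p" "last R = q" "sorted (map fst R)"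
proof -
  show "hd R = p" "last R = q" using refine_iter_hd_last[of "[p, q]"] by (simp_all add: R_def)
  moreover have "R \<noteq> []" using refine_iter_hd_last[of "[p, q]"] by (simp add: R_def)
  moreover have "2 \<le> length L" if "L \<noteq> []" "hd L \<noteq> last L" for L :: "(real \<times> real) list"
    using that by (cases L rule: remdups_adj.cases) auto
  moreover have "p \<noteq> q" using assms by auto
  ultimately show "2 \<le> length R" by metis
  show "sorted (map fst R)" unfolding R_def by (induction n) (use assms sorted_refine in auto)
qed

lemma refine_iter_Suc_segment:
  assumes "refine_seg lam p q = [p, P1, P2, P3]"
  shows "(refine lam ^^ Suc n) [p, q] =
    butlast ((refine lam ^^ n) [p, P1]) @ butlast ((refine lam ^^ n) [P1, P2]) @
    butlast ((refine lam ^^ n) [P2, P3]) @ (refine lam ^^ n) [P3, q]"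
proof -
  have "(refine lam ^^ Suc n) [p, q] =
    (refine lam ^^ n) (butlast [p, P1] @ butlast [P1, P2] @ butlast [P2, P3] @ [P3, q])"
    using assms by (simp del: funpow.simps add: funpow_Suc_right)
  also have "\<dots> = butlast ((refine lam ^^ n) [p, P1]) @
    (refine lam ^^ n) (butlast [P1, P2] @ butlast [P2, P3] @ [P3, q])"
    by (rule refine_iter_butlast_append) auto
  also have "(refine lam ^^ n) (butlast [P1, P2] @ butlast [P2, P3] @ [P3, q]) =
    butlast ((refine lam ^^ n) [P1, P2]) @ (refine lam ^^ n) (butlast [P2, P3] @ [P3, q])"
    by (rule refine_iter_butlast_append) auto
  also have "(refine lam ^^ n) (butlast [P2, P3] @ [P3, q]) =
    butlast ((refine lam ^^ n) [P2, P3]) @ (refine lam ^^ n) [P3, q]"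
    by (rule refine_iter_butlast_append) auto
  finally show ?thesis .
qed

lemma interp_butlast_append:
  assumes "2 \<le> length L1" "L2 \<noteq> []" "last L1 = hd L2" "sorted (map fst L1)"
  shows "interp (butlast L1 @ L2) y = (if y \<le> fst (last L1) then interp L1 y else interp L2 y)"
  using assms
proof (induction L1 y rule: interp.induct)
  case (3 p q rest y)
  show ?case
  proof (cases rest)
    case Nil
    then obtain X where "L2 = q # X" using 3 by (cases L2) auto
    then show ?thesis using Nil by simp
  next
    case (Cons r rs)
    have "fst q \<le> fst (last (q # rest))" using "3.prems"(4) Cons by simp
    then show ?thesis using 3 Cons by (auto simp: sorted2)
  qed
qed auto

lemma interp_refine_Suc:
  assumes "refine_seg lam p q = [p, P1, P2, P3]"
    and "fst p < fst P1" "fst P1 < fst P2" "fst P2 < fst P3" "fst P3 < fst q"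
  shows "interp ((refine lam ^^ Suc n) [p, q]) y =
    (if y \<le> fst P1 then interp ((refine lam ^^ n) [p, P1]) y
     else if y \<le> fst P2 then interp ((refine lam ^^ n) [P1, P2]) y
     else if y \<le> fst P3 then interp ((refine lam ^^ n) [P2, P3]) y
     else interp ((refine lam ^^ n) [P3, q]) y)"
proof -
  let ?R = "\<lambda>p q. (refine lam ^^ n) [p, q]"
  have split: "interp (butlast (?R p q) @ L) y = (if y \<le> fst q then interp (?R p q) y else interp L y)"
    if "fst p < fst q" "L \<noteq> []" "hd L = q" for p q L
    using interp_butlast_append refine_iter_segment[OF that(1)] that(2,3) by metis
  have hd: "butlast (?R p q) @ L \<noteq> [] \<and> hd (butlast (?R p q) @ L) = p" if "fst p < fst q" for p q L
    using refine_iter_segment(1,2)[OF that, where lam=lam and n=n]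
    by (cases "?R p q" rule: remdups_adj.cases) auto
  have "?R P3 q \<noteq> []" "hd (?R P3 q) = P3"
    using refine_iter_segment(1,2)[OF assms(5), where lam=lam and n=n] by auto
  then show ?thesis
    unfolding refine_iter_Suc_segment[OF assms(1)]
    using assms(2-5) by (simp add: split hd)
qed

section \<open>The normalised profile\<close>

text \<open>profile lam n m is F_n for the construction started on [0,1] from the segment of
  slope m through the origin.\<close>

fun profile :: "real \<Rightarrow> nat \<Rightarrow> real \<Rightarrow> real \<Rightarrow> real" where
  "profile lam 0 m t = m * t"
| "profile lam (Suc n) m t =
    (if t \<le> 1/3 then profile lam n m (3*t) / 3
     else if t \<le> 1/2 then m/3 + profile lam n (m + 6*lam * sqrt (1 + m\<^sup>2)) (6*t - 2) / 6
     else if t \<le> 2/3 then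
       m/2 + lam * sqrt (1 + m\<^sup>2) + profile lam n (m - 6*lam * sqrt (1 + m\<^sup>2)) (6*t - 3) / 6
     else 2*m/3 + profile lam n m (3*t - 2) / 3)"

declare profile.simps(2) [simp del]

lemma profile_at_0: "profile lam n m 0 = 0"
  and profile_at_1: "profile lam n m 1 = m"
  by (induction n arbitrary: m) (auto simp: profile.simps(2))

lemma profile_Suc_pieces:
  shows "t \<le> 1/3 \<Longrightarrow> profile lam (Suc n) m t = profile lam n m (3*t) / 3"
    and "1/3 \<le> t \<Longrightarrow> t \<le> 1/2 \<Longrightarrow>
      profile lam (Suc n) m t = m/3 + profile lam n (m + 6 * lam * sqrt (1 + m\<^sup>2)) (6*t - 2) / 6"
    and "1/2 \<le> t \<Longrightarrow> t \<le> 2/3 \<Longrightarrow> profile lam (Suc n) m t =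
      m/2 + lam * sqrt (1 + m\<^sup>2) + profile lam n (m - 6 * lam * sqrt (1 + m\<^sup>2)) (6*t - 3) / 6"
    and "2/3 \<le> t \<Longrightarrow> profile lam (Suc n) m t = 2*m/3 + profile lam n m (3*t - 2) / 3"
proof -
  show "t \<le> 1/3 \<Longrightarrow> profile lam (Suc n) m t = profile lam n m (3*t) / 3"
    by (simp add: profile.simps(2))
  show "1/3 \<le> t \<Longrightarrow> t \<le> 1/2 \<Longrightarrow>
      profile lam (Suc n) m t = m/3 + profile lam n (m + 6 * lam * sqrt (1 + m\<^sup>2)) (6*t - 2) / 6"
  proof (cases "t = 1/3")
    case True
    show ?thesis unfolding True by (simp add: profile.simps(2) profile_at_0 profile_at_1 field_simps)
  qed (auto simp: profile.simps(2))
  show "1/2 \<le> t \<Longrightarrow> t \<le> 2/3 \<Longrightarrow> profile lam (Suc n) m t =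
      m/2 + lam * sqrt (1 + m\<^sup>2) + profile lam n (m - 6 * lam * sqrt (1 + m\<^sup>2)) (6*t - 3) / 6"
  proof (cases "t = 1/2")
    case True
    show ?thesis unfolding True by (simp add: profile.simps(2) profile_at_0 profile_at_1 field_simps)
  qed (auto simp: profile.simps(2))
  show "2/3 \<le> t \<Longrightarrow> profile lam (Suc n) m t = 2*m/3 + profile lam n m (3*t - 2) / 3"
  proof (cases "t = 2/3")
    case True
    show ?thesis unfolding True by (simp add: profile.simps(2) profile_at_0 profile_at_1 field_simps)
  qed (auto simp: profile.simps(2))
qed

lemma profile_reflect:
  assumes "t \<in> {0..1}"
  shows "profile lam n m (1 - t) = m + profile lam n (-m) t"
  using assms
proof (induction n arbitrary: m t)
  case 0
  then show ?case by (simp add: algebra_simps)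
next
  case (Suc n)
  define S where "S = lam * sqrt (1 + m\<^sup>2)"
  consider "t \<le> 1/3" | "1/3 \<le> t" "t \<le> 1/2" | "1/2 \<le> t" "t \<le> 2/3" | "2/3 \<le> t" by linarith
  then show ?case
  proof cases
    case 1
    have "profile lam n m (1 - 3*t) = m + profile lam n (-m) (3*t)"
      using 1 Suc.prems by (intro Suc.IH) auto
    then show ?thesis
      using 1 by (simp add: profile_Suc_pieces(1,4) field_simps)
  next
    case 2
    have "profile lam n (m - 6*S) (1 - (6*t - 2)) = (m - 6*S) + profile lam n (6*S - m) (6*t - 2)"
      using 2 by (subst Suc.IH) auto
    then show ?thesis
      using 2 by (simp add: profile_Suc_pieces(2,3) S_def field_simps)
  next
    case 3
    have "profile lam n (m + 6*S) (1 - (6*t - 3)) = (m + 6*S) + profile lam n (-m - 6*S) (6*t - 3)"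
      using 3 by (subst Suc.IH) auto
    then show ?thesis
      using 3 by (simp add: profile_Suc_pieces(2,3) S_def field_simps)
  next
    case 4
    have "profile lam n m (1 - (3*t - 2)) = m + profile lam n (-m) (3*t - 2)"
      using 4 Suc.prems by (intro Suc.IH) auto
    then show ?thesis
      using 4 by (simp add: profile_Suc_pieces(1,4) field_simps)
  qed
qed

definition segment_profile ::
  "real \<Rightarrow> nat \<Rightarrow> real \<times> real \<Rightarrow> real \<times> real \<Rightarrow> real \<Rightarrow> real" where
  "segment_profile lam n p q y = snd p +
    (fst q - fst p) * profile lam n ((snd q - snd p) / (fst q - fst p)) ((y - fst p) / (fst q - fst p))"

lemma refine_seg_nodes:
  assumes "fst p < fst q"
  obtains P1 P2 P3 where "refine_seg lam p q = [p, P1, P2, P3]"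
    and "fst p < fst P1" "fst P1 < fst P2" "fst P2 < fst P3" "fst P3 < fst q"
proof -
  define P1 P2 P3 where "P1 = refine_seg lam p q ! 1" and "P2 = refine_seg lam p q ! 2"
    and "P3 = refine_seg lam p q ! 3"
  have "refine_seg lam p q = [p, P1, P2, P3]" by (simp add: refine_seg_def Let_def P1_def P2_def P3_def)
  moreover have "fst p < fst P1" "fst P1 < fst P2" "fst P2 < fst P3" "fst P3 < fst q"
    using assms by (simp_all add: P1_def P2_def P3_def refine_seg_def Let_def field_simps)
  ultimately show ?thesis by (rule that)
qed

lemma segment_profile_Suc:
  assumes "refine_seg lam p q = [p, P1, P2, P3]" "fst p < fst q"
  shows "segment_profile lam (Suc n) p q y =
    (if y \<le> fst P1 then segment_profile lam n p P1 y
     else if y \<le> fst P2 then segment_profile lam n P1 P2 y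
     else if y \<le> fst P3 then segment_profile lam n P2 P3 y
     else segment_profile lam n P3 q y)"
proof -
  define l m S t where "l = fst q - fst p" and "m = (snd q - snd p) / (fst q - fst p)"
    and "S = lam * sqrt (1 + m\<^sup>2)" and "t = (y - fst p) / l"
  have l: "0 < l" using assms(2) l_def by simp
  have "P1 = (fst p + l/3, snd p + m * (l/3)) \<and>
    P2 = (fst p + l/2, snd p + m * (l/2) + lam * l * sqrt (1 + m\<^sup>2)) \<and>
    P3 = (fst p + 2*l/3, snd p + m * (2*l/3))"
    using assms(1) unfolding refine_seg_def Let_def prod.collapse l_def m_def by (simp only: list.inject)
  then have P: "P1 = (fst p + l/3, snd p + m * (l/3))" "P2 = (fst p + l/2, snd p + m * (l/2) + S * l)"
    "P3 = (fst p + 2*l/3, snd p + m * (2*l/3))"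
    by (simp_all add: S_def)
  have q: "q = (fst p + l, snd p + m * l)" using l by (simp add: l_def m_def)
  have rescale: "segment_profile lam n N N' y = snd N + w * profile lam n \<mu> z"
    if "fst N' - fst N = w" "(snd N' - snd N) / w = \<mu>" "(y - fst N) / w = z" for N N' w \<mu> z
    using that by (simp add: segment_profile_def)
  have "segment_profile lam n p P1 y = snd p + l/3 * profile lam n m (3*t)"
    by (rule rescale) (use l in \<open>simp_all add: P t_def field_simps\<close>)
  moreover have "segment_profile lam n P1 P2 y = snd P1 + l/6 * profile lam n (m + 6*S) (6*t - 2)"
    by (rule rescale) (use l in \<open>simp_all add: P t_def field_simps\<close>)
  moreover have "segment_profile lam n P2 P3 y = snd P2 + l/6 * profile lam n (m - 6*S) (6*t - 3)"
    by (rule rescale) (use l in \<open>simp_all add: P t_def field_simps\<close>)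
  moreover have "segment_profile lam n P3 q y = snd P3 + l/3 * profile lam n m (3*t - 2)"
    by (rule rescale) (use l in \<open>simp_all add: P q t_def field_simps\<close>)
  moreover have "y \<le> fst P1 \<longleftrightarrow> t \<le> 1/3" "y \<le> fst P2 \<longleftrightarrow> t \<le> 1/2"
    "y \<le> fst P3 \<longleftrightarrow> t \<le> 2/3"
    using l by (simp_all add: P t_def field_simps)
  moreover have "segment_profile lam (Suc n) p q y = snd p + l * profile lam (Suc n) m t"
    by (simp add: segment_profile_def l_def m_def t_def)
  ultimately show ?thesis
    by (simp add: profile.simps(2) P S_def mult.assoc algebra_simps)
qed

lemma interp_refine_segment_profile:
  assumes "fst p < fst q" "y \<in> {fst p..fst q}"
  shows "interp ((refine lam ^^ n) [p, q]) y = segment_profile lam n p q y"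
  using assms
proof (induction n arbitrary: p q y)
  case 0
  then have "fst q - fst p \<noteq> 0" by simp
  with 0 show ?case by (simp add: segment_profile_def)
next
  case (Suc n)
  obtain P1 P2 P3 where seg: "refine_seg lam p q = [p, P1, P2, P3]"
    and P: "fst p < fst P1" "fst P1 < fst P2" "fst P2 < fst P3" "fst P3 < fst q"
    using refine_seg_nodes[OF Suc.prems(1)] .
  show ?case
    unfolding interp_refine_Suc[OF seg P] segment_profile_Suc[OF seg Suc.prems(1)]
    using Suc.prems(2) P by (simp add: Suc.IH)
qed

lemma Fn_eq_profile:
  assumes "y \<in> {0..1}"
  shows "Fn lam n y = profile lam n 0 y"
proof -
  have "nodes lam n = (refine lam ^^ n) [(0, 0), (1, 0)]" by (induction n) auto
  then show ?thesis
    using interp_refine_segment_profile[of "(0, 0)" "(1, 0)" y] assms by (simp add: Fn_def segment_profile_def)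
qed

section \<open>Inverse branches of T\<close>

text \<open>On the branch U t = i of T the inverse branch is z \<mapsto> Ut t + branch_factor i * z; over
  its image, profile lam (Suc k) m is an affine copy of profile lam k (child_slope lam i m),
  reflected for i = 2 where T reverses orientation.\<close>

definition branch_factor :: "nat \<Rightarrow> real" where
  "branch_factor i = (if i = 1 then 1/6 else if i = 2 then -1/6 else 1/3)"

definition child_slope :: "real \<Rightarrow> nat \<Rightarrow> real \<Rightarrow> real" where
  "child_slope lam i m =
    (if i = 1 then m + 6 * lam * sqrt (1 + m\<^sup>2)
     else if i = 2 then 6 * lam * sqrt (1 + m\<^sup>2) - m
     else m)"

lemma T_branch_inverse: "Ut t + branch_factor (U t) * T t = t"
  unfolding U_def Ut_def T_def branch_factor_def by (auto simp: field_simps)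

lemma branch_in_unit: "z \<in> {0..1} \<Longrightarrow> Ut t + branch_factor (U t) * z \<in> {0..1}"
  unfolding U_def Ut_def branch_factor_def by auto

lemma T_in_unit: "t \<in> {0..1} \<Longrightarrow> T t \<in> {0..1}"
  unfolding T_def by auto

lemma T_iter_in_unit: "t \<in> {0..1} \<Longrightarrow> (T ^^ n) t \<in> {0..1}"
  by (induction n) (use T_in_unit in auto)

lemma profile_Suc_branch:
  assumes "z \<in> {0..1}"
  shows "profile lam (Suc n) m (Ut t + branch_factor (U t) * z) =
    m * Ut t + \<bar>branch_factor (U t)\<bar> * profile lam n (child_slope lam (U t) m) z"
proof -
  have reflected: "profile lam n (m - 6 * lam * sqrt (1 + m\<^sup>2)) (1 - z) =
      m - 6 * lam * sqrt (1 + m\<^sup>2) + profile lam n (6 * lam * sqrt (1 + m\<^sup>2) - m) z"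
    using profile_reflect[OF assms] by simp
  consider "t < 1/3" | "1/3 \<le> t" "t < 1/2" | "1/2 \<le> t" "t < 2/3" | "2/3 \<le> t" by linarith
  then show ?thesis
  proof cases
    case 3
    then have "profile lam (Suc n) m (Ut t + branch_factor (U t) * z) = profile lam (Suc n) m (2/3 - z/6)"
      by (simp add: U_def Ut_def branch_factor_def)
    also have "\<dots> =
      m/2 + lam * sqrt (1 + m\<^sup>2) + profile lam n (m - 6 * lam * sqrt (1 + m\<^sup>2)) (1 - z) / 6"
      using assms by (subst profile_Suc_pieces(3)) (auto simp: algebra_simps)
    also have "\<dots> = m * Ut t + \<bar>branch_factor (U t)\<bar> * profile lam n (child_slope lam (U t) m) z"
      unfolding reflected using 3 by (simp add: U_def Ut_def branch_factor_def child_slope_def field_simps)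
    finally show ?thesis .
  qed (use assms in
    \<open>simp_all add: U_def Ut_def profile_Suc_pieces branch_factor_def child_slope_def field_simps\<close>)
qed

lemma profile_Suc_T:
  assumes "y \<in> {0..1}"
  shows "profile lam (Suc n) m y =
    m * Ut y + \<bar>branch_factor (U y)\<bar> * profile lam n (child_slope lam (U y) m) (T y)"
  using profile_Suc_branch[OF T_in_unit[OF assms], of lam n m y] by (simp add: T_branch_inverse)

text \<open>The only use of lambda >= 1/6: the descending middle piece has slope
  m - 6 lam sqrt (1 + m^2) <= 0, so its reflection rises.\<close>

lemma child_slope_nonneg:
  assumes "1/6 \<le> lam" "0 \<le> m"
  shows "0 \<le> child_slope lam i m"
proof -
  have "m \<le> sqrt (1 + m\<^sup>2)" by (simp add: real_le_rsqrt)
  also have "\<dots> \<le> 6 * lam * sqrt (1 + m\<^sup>2)"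
    using assms(1) mult_right_mono[of 1 "6 * lam" "sqrt (1 + m\<^sup>2)"] by simp
  finally show ?thesis using assms by (simp add: child_slope_def)
qed

section \<open>Intervals of generation n\<close>

lemma u_Suc: "u (Suc k) t = u k (T t)"
  and ut_Suc: "ut (Suc k) t = ut k (T t)"
  by (simp_all only: u_def ut_def funpow_Suc_right o_apply)

lemma beta_Suc: "beta i t (Suc n) = of_bool (U t = i) + beta i (T t) n"
proof -
  have sum: "beta i t n = (\<Sum>k<n. of_bool (u k t = i))" for t n
    by (simp add: beta_def sum_of_bool_eq Int_def lessThan_def)
  show ?thesis unfolding sum sum.lessThan_Suc_shift u_Suc by (simp add: u_def)
qed

lemma eps_ell_Suc: "eps t (Suc n) * ell t (Suc n) = branch_factor (U t) * (eps (T t) n * ell (T t) n)"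
proof -
  have "eps t (Suc n) = (if U t = 2 then -1 else 1) * eps (T t) n"
    unfolding eps_def beta_Suc by simp
  moreover have "U t \<in> {0, 1, 2, 3}" unfolding U_def by auto
  then have "ell t (Suc n) = (if U t = 1 \<or> U t = 2 then 1/6 else 1/3) * ell (T t) n"
    unfolding ell_def beta_Suc by (elim insertE emptyE) simp_all
  ultimately show ?thesis by (simp add: branch_factor_def)
qed

lemma a_Suc: "a (Suc n) t = Ut t + branch_factor (U t) * a n (T t)"
proof -
  have "a (Suc n) t = ut 0 t * eps t 0 * ell t 0 + (\<Sum>k<n. ut (Suc k) t * (eps t (Suc k) * ell t (Suc k)))"
    unfolding a_def sum.lessThan_Suc_shift by (simp add: mult.assoc)
  also have "\<dots> = Ut t + (\<Sum>k<n. branch_factor (U t) * (ut k (T t) * eps (T t) k * ell (T t) k))"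
  proof -
    have "ut 0 t = Ut t" "eps t 0 = 1" "ell t 0 = 1" by (simp_all add: ut_def eps_def ell_def beta_def)
    then show ?thesis unfolding eps_ell_Suc ut_Suc by (simp add: mult_ac)
  qed
  finally show ?thesis unfolding a_def sum_distrib_left .
qed

text \<open>cell_point n t maps [0,1] affinely onto the interval of generation n containing t,
  sending 0 to a n t.\<close>

definition cell_point :: "nat \<Rightarrow> real \<Rightarrow> real \<Rightarrow> real" where
  "cell_point n t s = a n t + eps t n * ell t n * s"

lemma cell_point_0: "cell_point 0 t s = s"
  by (simp add: cell_point_def a_def eps_def ell_def beta_def)

lemma cell_point_Suc: "cell_point (Suc n) t s = Ut t + branch_factor (U t) * cell_point n (T t) s"
  unfolding cell_point_def a_Suc eps_ell_Suc by (simp add: algebra_simps)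

lemma cell_point_in_unit: "s \<in> {0..1} \<Longrightarrow> cell_point n t s \<in> {0..1}"
  by (induction n arbitrary: t)
    (simp_all add: cell_point_0 cell_point_Suc branch_in_unit del: atLeastAtMost_iff)

lemma cell_point_T_iter: "cell_point n t ((T ^^ n) t) = t"
  by (induction n arbitrary: t)
    (simp_all add: cell_point_0 cell_point_Suc funpow_Suc_right T_branch_inverse del: funpow.simps)

lemma profile_Suc_cell_point:
  assumes "s \<in> {0..1}"
  shows "profile lam (Suc k) m (cell_point (Suc n) t s) =
    m * Ut t + \<bar>branch_factor (U t)\<bar> * profile lam k (child_slope lam (U t) m) (cell_point n (T t) s)"
  unfolding cell_point_Suc using profile_Suc_branch cell_point_in_unit[OF assms] .

lemma profile_cell_point_affine:
  assumes "s \<in> {0..1}"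
  shows "profile lam n m (cell_point n t s) = profile lam n m (cell_point n t 0) +
    (profile lam n m (cell_point n t 1) - profile lam n m (cell_point n t 0)) * s"
  using assms
proof (induction n arbitrary: m t)
  case 0
  then show ?case by (simp add: cell_point_0)
next
  case (Suc n)
  have "profile lam n (child_slope lam (U t) m) (cell_point n (T t) s) =
    profile lam n (child_slope lam (U t) m) (cell_point n (T t) 0) +
    (profile lam n (child_slope lam (U t) m) (cell_point n (T t) 1) -
     profile lam n (child_slope lam (U t) m) (cell_point n (T t) 0)) * s"
    using Suc .
  then show ?case using Suc.prems by (simp add: profile_Suc_cell_point) (simp add: algebra_simps)
qed

lemma profile_cell_point_mono:
  assumes "1/6 \<le> lam" "0 \<le> m"
  shows "profile lam n m (cell_point n t 0) \<le> profile lam n m (cell_point n t 1)"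
  using assms(2)
proof (induction n arbitrary: m t)
  case 0
  then show ?case by (simp add: cell_point_0)
next
  case (Suc n)
  have "profile lam n (child_slope lam (U t) m) (cell_point n (T t) 0) \<le>
        profile lam n (child_slope lam (U t) m) (cell_point n (T t) 1)"
    using Suc.IH child_slope_nonneg[OF assms(1) Suc.prems] .
  then show ?case by (simp add: profile_Suc_cell_point mult_left_mono)
qed

lemma profile_at_cell_start_stable:
  assumes "n \<le> k"
  shows "profile lam k m (a n t) = profile lam n m (a n t)"
  using assms
proof (induction n arbitrary: k m t)
  case 0
  then show ?case by (simp add: a_def profile_at_0)
next
  case (Suc n)
  then obtain k' where k: "k = Suc k'" "n \<le> k'" by (cases k) auto
  have "profile lam (Suc j) m (a (Suc n) t) =
    m * Ut t + \<bar>branch_factor (U t)\<bar> * profile lam j (child_slope lam (U t) m) (a n (T t))" for j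
    using profile_Suc_cell_point[of 0 lam j m n t] by (simp add: cell_point_def)
  then show ?case using Suc.IH[OF k(2)] k(1) by simp
qed

lemma u_T_iter: "u k ((T ^^ n) t) = u (k + n) t"
  by (simp add: u_def funpow_add)

lemma T_iter_in_E:
  assumes "(T ^^ n) t \<in> E"
  shows "t \<in> E"
proof -
  obtain N c where c: "c = 0 \<or> c = 3" and N: "\<forall>k\<ge>N. u (k + n) t = c"
    using assms by (auto simp: E_def u_T_iter)
  have "\<forall>k\<ge>N + n. u k t = c"
  proof (intro allI impI)
    fix k assume "N + n \<le> k"
    then show "u k t = c" using N[rule_format, of "k - n"] by simp
  qed
  then show ?thesis using c unfolding E_def by auto
qed

lemma zero_in_E: "0 \<in> E"
  and one_in_E: "1 \<in> E"
proof -
  have "(T ^^ k) 0 = 0" "(T ^^ k) 1 = 1" for k by (induction k) (simp_all add: T_def)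
  then have "u k 0 = 0" "u k 1 = 3" for k by (simp_all add: u_def U_def)
  then show "0 \<in> E" "1 \<in> E" unfolding E_def by blast+
qed

lemma T_iter_in_open_unit:
  assumes "t \<in> {0..1}" "t \<notin> E"
  shows "(T ^^ n) t \<in> {0<..<1}"
proof -
  have "(T ^^ n) t \<in> {0..1}" using T_iter_in_unit[OF assms(1)] .
  moreover have "(T ^^ n) t \<noteq> 0" "(T ^^ n) t \<noteq> 1"
    using T_iter_in_E zero_in_E one_in_E assms(2) by metis+
  ultimately show ?thesis by auto
qed

section \<open>Convergence of the construction\<close>

definition increment_rate :: "real \<Rightarrow> real" where
  "increment_rate lam = max (1/3) (1/6 + lam)"

lemma sqrt_one_plus_square_shift: "sqrt (1 + (m + c)\<^sup>2) \<le> sqrt (1 + m\<^sup>2) + \<bar>c\<bar>"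
  using real_sqrt_sum_squares_triangle_ineq[of 1 0 m c] by simp

lemma child_slope_growth:
  assumes "0 \<le> lam"
  shows "\<bar>branch_factor i\<bar> * sqrt (1 + (child_slope lam i m)\<^sup>2) \<le>
    increment_rate lam * sqrt (1 + m\<^sup>2)"
proof -
  define Q where "Q = sqrt (1 + m\<^sup>2)"
  have Q: "0 \<le> Q" unfolding Q_def by simp
  have rate: "(1/6 + lam) * Q \<le> increment_rate lam * Q" "1/3 * Q \<le> increment_rate lam * Q"
    using Q by (intro mult_right_mono; simp add: increment_rate_def)+
  have "sqrt (1 + (child_slope lam i m)\<^sup>2) \<le> Q + 6 * lam * Q" if "i = 1 \<or> i = 2"
    using that sqrt_one_plus_square_shift[of m "6 * lam * Q"] sqrt_one_plus_square_shift[of "-m" "6 * lam * Q"]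
      assms Q unfolding Q_def child_slope_def by auto
  then have "\<bar>branch_factor i\<bar> * sqrt (1 + (child_slope lam i m)\<^sup>2) \<le> (1/6 + lam) * Q"
    if "i = 1 \<or> i = 2"
    using that unfolding branch_factor_def by (auto simp: field_simps)
  moreover have "\<bar>branch_factor i\<bar> * sqrt (1 + (child_slope lam i m)\<^sup>2) = 1/3 * Q"
    if "i \<noteq> 1" "i \<noteq> 2"
    using that unfolding branch_factor_def child_slope_def Q_def by simp
  ultimately show ?thesis using rate unfolding Q_def by fastforce
qed

lemma child_slope_excess:
  "\<bar>branch_factor i\<bar> * child_slope lam i m - branch_factor i * m =
    (if i = 1 \<or> i = 2 then lam * sqrt (1 + m\<^sup>2) else 0)"
  by (simp add: branch_factor_def child_slope_def field_simps)

lemma profile_increment_bounds: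
  assumes "0 \<le> lam" "y \<in> {0..1}"
  shows "0 \<le> profile lam (Suc n) m y - profile lam n m y \<and>
    profile lam (Suc n) m y - profile lam n m y \<le> lam * sqrt (1 + m\<^sup>2) * increment_rate lam ^ n"
  using assms(2)
proof (induction n arbitrary: m y)
  case 0
  have "profile lam 1 m y - profile lam 0 m y =
    (\<bar>branch_factor (U y)\<bar> * child_slope lam (U y) m - branch_factor (U y) * m) * T y"
  proof -
    have "profile lam 0 m y = m * (Ut y + branch_factor (U y) * T y)" by (simp add: T_branch_inverse)
    with profile_Suc_T[OF 0, of lam 0 m] show ?thesis by (simp add: algebra_simps)
  qed
  then show ?case
    using T_in_unit[OF 0] assms(1) unfolding child_slope_excess by (auto intro: mult_left_le)
next
  case (Suc n)
  let ?f = "\<bar>branch_factor (U y)\<bar>" and ?\<mu> = "child_slope lam (U y) m"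
  let ?\<Delta> = "profile lam (Suc n) ?\<mu> (T y) - profile lam n ?\<mu> (T y)"
  have step: "profile lam (Suc (Suc n)) m y - profile lam (Suc n) m y = ?f * ?\<Delta>"
    using profile_Suc_T[OF Suc.prems] by (simp add: algebra_simps)
  have IH: "0 \<le> ?\<Delta>" "?\<Delta> \<le> lam * sqrt (1 + ?\<mu>\<^sup>2) * increment_rate lam ^ n"
    using Suc.IH[OF T_in_unit[OF Suc.prems]] by auto
  have "?f * ?\<Delta> \<le> ?f * (lam * sqrt (1 + ?\<mu>\<^sup>2) * increment_rate lam ^ n)"
    using IH(2) by (simp add: mult_left_mono)
  also have "\<dots> \<le> lam * sqrt (1 + m\<^sup>2) * increment_rate lam ^ Suc n"
    using mult_left_mono[OF child_slope_growth[OF assms(1)], of "lam * increment_rate lam ^ n"] assms(1)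
    by (simp add: increment_rate_def mult_ac)
  finally show ?case using IH(1) step by simp
qed

lemma profile_bounded:
  assumes "0 \<le> lam" "lam < 5/6" "y \<in> {0..1}"
  shows "profile lam n 0 y \<le> lam / (1 - increment_rate lam)"
proof -
  define r where "r = increment_rate lam"
  have r: "0 \<le> r" "r < 1" using assms unfolding r_def increment_rate_def by auto
  have "profile lam n 0 y \<le> lam / (1 - r) * (1 - r ^ n)"
  proof (induction n)
    case (Suc n)
    have "profile lam (Suc n) 0 y \<le> profile lam n 0 y + lam * r ^ n"
      using profile_increment_bounds[OF assms(1,3), of n 0] unfolding r_def by simp
    also have "\<dots> \<le> lam / (1 - r) * (1 - r ^ Suc n)"
      using Suc r by (simp add: field_simps)
    finally show ?case .
  qed simp
  also have "\<dots> \<le> lam / (1 - r)"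
    using r assms(1) mult_left_le[of "1 - r ^ n" "lam / (1 - r)"] by simp
  finally show ?thesis unfolding r_def .
qed

lemma Fn_le_F:
  assumes "0 \<le> lam" "lam < 5/6" "x \<in> {0..1}"
  shows "Fn lam n x \<le> F lam x"
proof -
  have Fn: "Fn lam k x = profile lam k 0 x" for k using Fn_eq_profile[OF assms(3)] .
  have inc: "incseq (\<lambda>k. Fn lam k x)"
    unfolding Fn using profile_increment_bounds[OF assms(1,3)] by (intro incseq_SucI) simp
  have "bdd_above (range (\<lambda>k. Fn lam k x))"
    unfolding Fn using profile_bounded[OF assms] by (intro bdd_aboveI2) simp
  then have "(\<lambda>k. Fn lam k x) \<longlonglongrightarrow> (SUP k. Fn lam k x)"
    using inc by (rule LIMSEQ_incseq_SUP)
  then have "convergent (\<lambda>k. Fn lam k x)" by (rule convergentI)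
  then have lim: "(\<lambda>k. Fn lam k x) \<longlonglongrightarrow> F lam x" unfolding F_def convergent_LIMSEQ_iff .
  show ?thesis using incseq_le[OF inc lim] .
qed

lemma F_at_cell_start: "F lam (a n t) = Fn lam n (a n t)"
proof -
  have "a n t = cell_point n t 0" by (simp add: cell_point_def)
  then have "a n t \<in> {0..1}" using cell_point_in_unit[of 0 n t] by simp
  then have "Fn lam k (a n t) = Fn lam n (a n t)" if "n \<le> k" for k
    using profile_at_cell_start_stable[OF that, of lam 0 t] by (simp add: Fn_eq_profile)
  then have "\<forall>\<^sub>F k in sequentially. Fn lam k (a n t) = Fn lam n (a n t)"
    by (rule eventually_sequentiallyI)
  then have "(\<lambda>k. Fn lam k (a n t)) \<longlonglongrightarrow> Fn lam n (a n t)" by (rule tendsto_eventually)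
  then show ?thesis unfolding F_def by (rule limI)
qed

lemma Fn_cell_point_affine:
  assumes "s \<in> {0..1}"
  shows "Fn lam n (cell_point n t s) = Fn lam n (a n t) + (Fn lam n (cell_point n t 1) - Fn lam n (a n t)) * s"
proof -
  have "a n t = cell_point n t 0" by (simp add: cell_point_def)
  then show ?thesis
    using profile_cell_point_affine[OF assms, of lam n 0 t] cell_point_in_unit[of _ n t] assms
    by (simp add: Fn_eq_profile)
qed

lemma Fn_at_cell_start_le:
  assumes "1/6 \<le> lam" "x \<in> {0..1}"
  shows "Fn lam n (a n x) \<le> Fn lam n x"
proof -
  have s0: "(T ^^ n) x \<in> {0..1}" using T_iter_in_unit[OF assms(2)] .
  have "a n x = cell_point n x 0" by (simp add: cell_point_def)
  then have "Fn lam n (a n x) \<le> Fn lam n (cell_point n x 1)"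
    using profile_cell_point_mono[OF assms(1), of 0 n x] cell_point_in_unit[of _ n x]
    by (simp add: Fn_eq_profile)
  then show ?thesis
    using Fn_cell_point_affine[OF s0, of lam n x] s0 cell_point_T_iter[of n x] by (simp add: mult_nonneg_nonneg)
qed

lemma deriv_eq_locally_affine:
  fixes f :: "real \<Rightarrow> real"
  assumes "0 < d" and "\<And>y. dist y x < d \<Longrightarrow> f y = c + k * y"
  shows "deriv f x = k"
proof -
  have "((\<lambda>y. c + k * y) has_field_derivative k) (at x)"
    by (auto intro!: derivative_eq_intros)
  then have "(f has_field_derivative k) (at x)"
    by (rule has_field_derivative_transform_within_open[of _ _ _ "ball x d"])
      (use assms in \<open>auto simp: dist_commute\<close>)
  then show ?thesis by (rule DERIV_imp_deriv)
qed

lemma slope_n_mult_offset: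
  assumes "x \<in> {0..1}" "x \<notin> E"
  shows "slope_n lam n x * (x - a n x) = Fn lam n x - Fn lam n (a n x)"
proof -
  define A D s0 R where "A = a n x" and "D = eps x n * ell x n" and "s0 = (T ^^ n) x"
    and "R = Fn lam n (cell_point n x 1) - Fn lam n (a n x)"
  have D: "D \<noteq> 0" by (simp add: D_def eps_def ell_def)
  have s0: "0 < s0" "s0 < 1" using T_iter_in_open_unit[OF assms] s0_def by auto
  have x: "x = A + D * s0" using cell_point_T_iter[of n x] by (simp add: cell_point_def A_def D_def s0_def)
  have "Fn lam n y = (Fn lam n A - R / D * A) + R / D * y"
    if "dist y x < \<bar>D\<bar> * min s0 (1 - s0)" for y
  proof -
    define s where "s = (y - A) / D"
    have "s - s0 = (y - x) / D" using x D by (simp add: s_def field_simps)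
    then have "\<bar>s - s0\<bar> = dist y x / \<bar>D\<bar>" by (simp add: dist_real_def abs_divide)
    also have "\<dots> < min s0 (1 - s0)"
      using that D by (subst pos_divide_less_eq) (simp_all add: mult.commute)
    finally have "s \<in> {0..1}" by auto
    moreover have "cell_point n x s = y" unfolding cell_point_def A_def[symmetric] D_def[symmetric]
      using D by (simp add: s_def)
    ultimately have "Fn lam n y = Fn lam n A + R * s"
      using Fn_cell_point_affine[of s lam n x] by (simp add: A_def R_def)
    then show ?thesis using D by (simp add: s_def field_simps)
  qed
  then have "slope_n lam n x = R / D"
    unfolding slope_n_def using s0 D
    by (intro deriv_eq_locally_affine[where d = "\<bar>D\<bar> * min s0 (1 - s0)"]) auto
  moreover have "cell_point n x s0 = x" using cell_point_T_iter[of n x] by (simp add: s0_def)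
  then have "Fn lam n x = Fn lam n A + R * s0"
    using Fn_cell_point_affine[of s0 lam n x] s0 by (simp add: A_def R_def)
  ultimately show ?thesis unfolding A_def[symmetric] using x D by simp
qed

theorem proposition3p10:
  fixes lam :: real and n :: nat and x :: real
  assumes "1/6 < lam" and "lam < 5/6"
    and "x \<in> {0..1}" and "x \<notin> E"
  shows "\<bar>F lam x - F lam (a n x)\<bar> \<ge> \<bar>slope_n lam n x\<bar> * \<bar>x - a n x\<bar>"
proof -
  have lam: "0 \<le> lam" "1/6 \<le> lam" using assms(1) by auto
  have "\<bar>slope_n lam n x\<bar> * \<bar>x - a n x\<bar> = \<bar>Fn lam n x - Fn lam n (a n x)\<bar>"
    by (simp only: abs_mult[symmetric] slope_n_mult_offset[OF assms(3,4)])
  also have "\<dots> = Fn lam n x - Fn lam n (a n x)"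
    using Fn_at_cell_start_le[OF lam(2) assms(3)] by simp
  also have "\<dots> \<le> F lam x - F lam (a n x)"
    using Fn_le_F[OF lam(1) assms(2,3)] F_at_cell_start by simp
  also have "\<dots> \<le> \<bar>F lam x - F lam (a n x)\<bar>" by simp
  finally show ?thesis .
qed

end
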